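(* Let $H$ be a 0-SYM filter with $H(1)=1$, and suppose $-1$ is a zero of $H$ of multiplicity exactly $2m$, where $m\ge1$. Let $\sigma=\operatorname{sign}(H(i))\in\{+1,-1\}$ and let $\Lambda=\{\lambda_1,\dots,\lambda_r\}$ be the parameter multiset of $H$ defined below. Let $m_0(\xi)=H(e^{-i\xi})$. Then $$m_0'(\tfrac{\pi}{2})=-(2-\sqrt2\,\sigma)\left(m+\sum_{j=1}^r\frac{1}{\eta(\lambda_j)}\right).$$
   Context: A 0-SYM filter is a rational function $H(z)$ with real coefficients satisfying $H(z)^2+H(-z)^2=1$ and $H(z)=H(z^{-1})$. For such $H$ one has $H(i)=\pm1/\sqrt2$. The function $\eta$ is $\eta(z)=\frac{z+z^{-1}}{2}$. The parameter multiset $\Lambda$ is defined as follows. Consider the multiset of solutions $w\ne1$ of $H(w)=1$, each counted with half its multiplicity (these multiplicities are even). This multiset is invariant under $w\mapsto w^{-1}$ and contains no $w$ with $w=w^{-1}$. The multiset $\Lambda$ keeps exactly one element of each reciprocal pair $\{w,w^{-1}\}$. Thus the solutions $w\ne1$ of $H(w)=1$, with multiplicity, are exactly the $\lambda_j$ and $\lambda_j^{-1}$, each counted twice. *)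

theory Defs
  imports "HOL-Analysis.Analysis" "HOL-Computational_Algebra.Polynomial" "HOL-Library.Multiset"
begin

definition rat_eval :: "real poly \<Rightarrow> real poly \<Rightarrow> complex \<Rightarrow> complex" where
  "rat_eval p q z = poly (map_poly complex_of_real p) z / poly (map_poly complex_of_real q) z"

text \<open>0-SYM filter: H(z)^2 + H(-z)^2 = 1 and H(z) = H(1/z) as rational functions,
  i.e. at every point where both sides are defined.\<close>
definition zero_sym_filter :: "real poly \<Rightarrow> real poly \<Rightarrow> bool" where
  "zero_sym_filter p q \<longleftrightarrow> q \<noteq> 0 \<and>
     (\<forall>z. poly (map_poly complex_of_real q) z \<noteq> 0 \<and> poly (map_poly complex_of_real q) (-z) \<noteq> 0 \<longrightarrow>
          (rat_eval p q z)\<^sup>2 + (rat_eval p q (-z))\<^sup>2 = 1) \<and>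
     (\<forall>z. z \<noteq> 0 \<and> poly (map_poly complex_of_real q) z \<noteq> 0 \<and> poly (map_poly complex_of_real q) (1/z) \<noteq> 0 \<longrightarrow>
          rat_eval p q z = rat_eval p q (1/z))"

definition eta :: "complex \<Rightarrow> complex" where
  "eta z = (z + 1/z) / 2"

text \<open>Parameter multiset: for coprime p, q the solutions of H(w)=1 with multiplicity are the
  roots of p - q. Lambda keeps one element of each reciprocal pair, half multiplicity.\<close>
definition is_param_multiset :: "real poly \<Rightarrow> real poly \<Rightarrow> complex multiset \<Rightarrow> bool" where
  "is_param_multiset p q L \<longleftrightarrow> 1 \<notin># L \<and>
     (\<forall>w. count L w = 0 \<or> count L (1/w) = 0) \<and>
     (\<forall>w. w \<noteq> 1 \<longrightarrow> order w (map_poly complex_of_real (p - q)) = 2 * (count L w + count L (1/w)))"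

end

(* Write H = P / Q, where P, Q are the complexifications of the coprime real polynomials p, q.
   On the unit circle 1/z = cnj z, so H(z) = H(1/z) = cnj (H z) is real, and H(z)^2 + H(-z)^2 = 1
   bounds it by 1; by continuity Q cannot vanish at i, and H(i) = H(-i) = sigma * sqrt 2 / 2.
   The derivative of m_0 at pi/2 is -H'(-i), a real number, and writing H - 1 = (P - Q) / Q,
   H'(-i) = (H(-i) - 1) * (sum over the roots x of P - Q of 1/(-i - x)
                           - sum over the roots x of Q of 1/(-i - x)).
   The 0-SYM identity P(z)^2 Q(-z)^2 + P(-z)^2 Q(z)^2 = Q(z)^2 Q(-z)^2 shows that P - Q vanishes
   to order 4m at 1 and that the roots of Q are symmetric under x |-> -x; together with their
   symmetry under conjugation this makes the second sum purely imaginary. The other roots of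
   P - Q are the lambda_j and 1/lambda_j, twice each, and 1/(-i - l) + 1/(-i - 1/l) = i - 1/eta(l);
   comparing real parts gives the formula. *)

theory Submission
  imports Defs "HOL-Computational_Algebra.Field_as_Ring" "HOL-Computational_Algebra.Polynomial_Factorial"
    "HOL-Computational_Algebra.Fundamental_Theorem_Algebra"
begin

abbreviation of_real_poly :: "real poly \<Rightarrow> complex poly" where
  "of_real_poly \<equiv> map_poly complex_of_real"

lemma of_real_poly_add: "of_real_poly (p + q) = of_real_poly p + of_real_poly q"
  by (rule poly_eqI) (simp add: coeff_map_poly)

lemma of_real_poly_diff: "of_real_poly (p - q) = of_real_poly p - of_real_poly q"
  by (rule poly_eqI) (simp add: coeff_map_poly)

lemma of_real_poly_mult: "of_real_poly (p * q) = of_real_poly p * of_real_poly q"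
  by (rule poly_eqI) (simp add: coeff_map_poly coeff_mult)

lemma of_real_poly_power: "of_real_poly (p ^ n) = of_real_poly p ^ n"
  by (induction n) (simp_all add: of_real_poly_mult)

lemma of_real_poly_eq_0_iff [simp]: "of_real_poly p = 0 \<longleftrightarrow> p = 0"
  by (rule map_poly_eq_0_iff) auto

lemma poly_of_real_poly_of_real: "poly (of_real_poly p) (of_real x) = of_real (poly p x)"
  by (induction p) (auto simp: map_poly_pCons)

lemma map_poly_cnj_of_real_poly [simp]: "map_poly cnj (of_real_poly p) = of_real_poly p"
  by (rule poly_eqI) (simp add: coeff_map_poly)

lemma poly_of_real_poly_cnj: "poly (of_real_poly p) (cnj z) = cnj (poly (of_real_poly p) z)"
  by (metis map_poly_cnj_of_real_poly poly_map_poly_cnj complex_cnj_cnj)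

lemma order_of_real_poly:
  assumes "p \<noteq> 0"
  shows "order (of_real a) (of_real_poly p) = order a p"
proof -
  obtain g where p: "p = [:-a, 1:] ^ order a p * g" and "\<not> [:-a, 1:] dvd g"
    using order_decomp[OF assms] by blast
  then have g: "poly (of_real_poly g) (of_real a) \<noteq> 0"
    by (simp add: poly_of_real_poly_of_real poly_eq_0_iff_dvd)
  then have "[:-of_real a, 1:] ^ order a p * of_real_poly g \<noteq> 0"
    by auto
  moreover have "of_real_poly p = [:-of_real a, 1:] ^ order a p * of_real_poly g"
    by (subst p) (simp add: of_real_poly_mult of_real_poly_power map_poly_pCons)
  ultimately show ?thesis
    using g by (simp add: order_mult order_power_n_n order_0I)
qed

lemma of_real_poly_no_common_root:
  assumes "coprime p q" and "poly (of_real_poly p) z = 0"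
  shows "poly (of_real_poly q) z \<noteq> 0"
proof
  assume "poly (of_real_poly q) z = 0"
  obtain a b where "bezout_coefficients p q = (a, b)"
    by (cases "bezout_coefficients p q")
  then have "a * p + b * q = 1"
    using bezout_coefficients assms(1) by (metis coprime_imp_gcd_eq_1)
  then have "poly (of_real_poly (a * p + b * q)) z = 1"
    by simp
  with assms(2) \<open>poly (of_real_poly q) z = 0\<close> show False
    by (simp add: of_real_poly_add of_real_poly_mult)
qed

abbreviation neg_var :: "'a::comm_ring_1 poly \<Rightarrow> 'a poly" where
  "neg_var P \<equiv> P \<circ>\<^sub>p [:0, -1:]"

lemma poly_neg_var [simp]: "poly (neg_var P) z = poly P (- z)"
  by (simp add: poly_pcompose)

lemma neg_var_neg_var [simp]: "neg_var (neg_var P) = P"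
  by (simp add: pcompose_assoc [symmetric] pcompose_pCons)

lemma neg_var_eq_0_iff [simp]: "neg_var P = 0 \<longleftrightarrow> P = 0"
  by (metis neg_var_neg_var pcompose_0)

lemma pcompose_dvd: "X dvd Y \<Longrightarrow> X \<circ>\<^sub>p r dvd Y \<circ>\<^sub>p r"
  by (metis dvd_def pcompose_mult)

lemma pcompose_power: "(X ^ n) \<circ>\<^sub>p r = (X \<circ>\<^sub>p r) ^ n"
  by (induction n) (simp_all add: pcompose_mult pcompose_1)

lemma neg_var_linear_power: "neg_var ([:c, 1:] ^ n) = smult ((-1) ^ n) ([:-c, 1:] ^ n)"
proof -
  have "neg_var ([:c, 1:] ^ n) = neg_var [:c, 1:] ^ n"
    by (rule pcompose_power)
  also have "neg_var [:c, 1:] = smult (-1) [:-c, 1:]"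
    by (simp add: pcompose_pCons)
  finally show ?thesis
    by (metis smult_power)
qed

lemma order_neg_var:
  fixes P :: "'a::field poly"
  assumes "P \<noteq> 0"
  shows "order a (neg_var P) = order (- a) P"
proof -
  have le: "order (- c) Y \<le> order c (neg_var Y)" if "Y \<noteq> 0" for c and Y :: "'a poly"
  proof -
    have "neg_var ([:c, 1:] ^ order (- c) Y) dvd neg_var Y"
      using order_1[of "- c" Y] by (simp add: pcompose_dvd)
    then have "[:-c, 1:] ^ order (- c) Y dvd neg_var Y"
      by (simp add: neg_var_linear_power smult_dvd_iff)
    then show ?thesis
      using that by (simp add: order_divides)
  qed
  show ?thesis
    using le[OF assms, of a] le[of "neg_var P" "- a"] assms by simp
qed

lemma map_poly_cnj_mult: "map_poly cnj (A * B) = map_poly cnj A * map_poly cnj B"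
  by (simp add: poly_eq_poly_eq_iff [symmetric] fun_eq_iff)

lemma map_poly_cnj_power: "map_poly cnj (A ^ n) = map_poly cnj A ^ n"
  by (induction n) (simp_all add: map_poly_cnj_mult)

lemma map_poly_cnj_cnj [simp]: "map_poly cnj (map_poly cnj A) = A"
  by (simp add: poly_eq_poly_eq_iff [symmetric] fun_eq_iff)

lemma map_poly_cnj_eq_0_iff [simp]: "map_poly cnj A = 0 \<longleftrightarrow> A = 0"
  by (metis map_poly_cnj_cnj map_poly_0)

lemma order_map_poly_cnj:
  assumes "A \<noteq> 0"
  shows "order (cnj a) (map_poly cnj A) = order a A"
proof -
  have le: "order c B \<le> order (cnj c) (map_poly cnj B)" if "B \<noteq> 0" for c B
  proof -
    have "map_poly cnj ([:-c, 1:] ^ order c B) dvd map_poly cnj B"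
      by (metis dvd_def map_poly_cnj_mult order_1)
    then show ?thesis
      using that by (simp add: map_poly_cnj_power order_divides map_poly_pCons)
  qed
  show ?thesis
    using le[OF assms, of a] le[of "map_poly cnj A" "cnj a"] assms by simp
qed

lemma count_image_mset_involution:
  assumes "\<And>x. f (f x) = x"
  shows "count (image_mset f M) x = count M (f x)"
proof -
  have "f -` {x} = {f x}"
    using assms by auto
  then show ?thesis
    by (cases "f x \<in># M") (auto simp: count_image_mset not_in_iff)
qed

lemma image_mset_cnj_proots_of_real_poly:
  "image_mset cnj (proots (of_real_poly p)) = proots (of_real_poly p)"
proof (cases "p = 0")
  case False
  then show ?thesis
    by (intro multiset_eqI)
      (simp add: count_image_mset_involution order_map_poly_cnj [symmetric, of _ "cnj _"])
qed simp

lemma cnj_sum_mset: "cnj (\<Sum>x\<in>#M. f x) = (\<Sum>x\<in>#M. cnj (f x))"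
  by (induction M) simp_all

lemma sum_mset_in_Reals_if_cnj_invariant:
  assumes "image_mset cnj M = M" and "\<And>x. f (cnj x) = cnj (f x)"
  shows "(\<Sum>x\<in>#M. f x) \<in> \<real>"
proof -
  have "cnj (\<Sum>x\<in>#M. f x) = (\<Sum>x\<in>#image_mset cnj M. f x)"
    by (simp add: cnj_sum_mset assms(2) multiset.map_comp o_def)
  then show ?thesis
    by (simp add: assms(1) Reals_cnj_iff)
qed

lemma Re_sum_mset_inverse_diff_eq_0:
  assumes "Re z = 0" and "image_mset (\<lambda>x. - cnj x) M = M"
  shows "Re (\<Sum>x\<in>#M. 1 / (z - x)) = 0"
proof -
  have "cnj z = - z"
    using assms(1) by (simp add: complex_eq_iff)
  then have "cnj (\<Sum>x\<in>#M. 1 / (z - x)) = (\<Sum>x\<in>#M. - (1 / (z - (- cnj x))))"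
    by (simp add: cnj_sum_mset minus_divide_right)
  also have "\<dots> = - (\<Sum>x\<in>#image_mset (\<lambda>x. - cnj x) M. 1 / (z - x))"
    by (induction M) simp_all
  finally have "Re (cnj (\<Sum>x\<in>#M. 1 / (z - x))) = - Re (\<Sum>x\<in>#M. 1 / (z - x))"
    using assms(2) by simp
  then show ?thesis
    by simp
qed

definition log_deriv_sum :: "complex poly \<Rightarrow> complex \<Rightarrow> complex" where
  "log_deriv_sum A z = (\<Sum>x\<in>#proots A. 1 / (z - x))"

lemma poly_pderiv_prod_linear:
  fixes z :: complex
  assumes "z \<notin># R"
  shows "poly (pderiv (\<Prod>x\<in>#R. [:-x, 1:])) z
           = poly (\<Prod>x\<in>#R. [:-x, 1:]) z * (\<Sum>x\<in>#R. 1 / (z - x))"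
  using assms
proof (induction R)
  case (add a R)
  define F where "F = (\<Prod>x\<in>#R. [:-x, 1:])"
  have prod: "(\<Prod>x\<in>#add_mset a R. [:-x, 1:]) = [:-a, 1:] * F"
    by (simp add: F_def)
  have deriv: "pderiv ([:-a, 1:] * F) = F + [:-a, 1:] * pderiv F"
    by (simp only: pderiv_mult) (simp add: pderiv_pCons)
  have "z - a \<noteq> 0"
    using add.prems by auto
  moreover have "poly (pderiv F) z = poly F z * (\<Sum>x\<in>#R. 1 / (z - x))"
    using add by (simp add: F_def)
  ultimately show ?case
    unfolding prod deriv by (simp add: field_simps)
qed simp

lemma poly_pderiv_eq_log_deriv_sum:
  assumes "poly A z \<noteq> 0"
  shows "poly (pderiv A) z = poly A z * log_deriv_sum A z"
proof -
  have "A \<noteq> 0"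
    using assms by auto
  with assms have "z \<notin># proots A"
    by simp
  then show ?thesis
    using poly_pderiv_prod_linear[of z "proots A"] complex_poly_decompose_multiset[of A]
    unfolding log_deriv_sum_def
    by (metis (no_types, lifting) mult.assoc pderiv_smult poly_smult)
qed

lemma has_field_derivative_poly_quotient:
  assumes "poly A z \<noteq> 0" and "poly B z \<noteq> 0"
  shows "((\<lambda>w. poly A w / poly B w) has_field_derivative
           poly A z / poly B z * (log_deriv_sum A z - log_deriv_sum B z)) (at z)"
proof -
  have "((\<lambda>w. poly A w / poly B w) has_field_derivative
          (poly (pderiv A) z * poly B z - poly A z * poly (pderiv B) z) / (poly B z * poly B z)) (at z)"
    using assms(2) by (intro DERIV_divide poly_DERIV)
  moreover have "(poly (pderiv A) z * poly B z - poly A z * poly (pderiv B) z) / (poly B z * poly B z)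
                   = poly A z / poly B z * (log_deriv_sum A z - log_deriv_sum B z)"
    using assms by (simp add: poly_pderiv_eq_log_deriv_sum divide_simps) (simp add: algebra_simps)
  ultimately show ?thesis
    by simp
qed

lemma eta_1 [simp]: "eta 1 = 1"
  by (simp add: eta_def)

lemma eta_inverse: "eta (inverse z) = eta z"
  by (simp add: eta_def inverse_eq_divide add.commute)

lemma cnj_eta: "cnj (eta z) = eta (cnj z)"
  by (simp add: eta_def)

lemma inverse_minus_i_pair:
  assumes "l \<noteq> 0" and "l \<noteq> \<i>" and "l \<noteq> - \<i>"
  shows "1 / (- \<i> - l) + 1 / (- \<i> - inverse l) = \<i> - 1 / eta l"
proof -
  have "l\<^sup>2 + 1 = (l - \<i>) * (l + \<i>)"
    by (simp add: algebra_simps power2_eq_square)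
  then have sq: "l\<^sup>2 + 1 \<noteq> 0"
    using assms(2,3) by (auto simp: add_eq_0_iff2)
  have "- \<i> * l - 1 = - \<i> * (l - \<i>)"
    by (simp add: algebra_simps)
  then have den: "- \<i> * l - 1 \<noteq> 0"
    using assms(2) by simp
  have inv: "- \<i> - inverse l = (- \<i> * l - 1) / l"
    using assms(1) by (simp add: divide_simps)
  have "l + 1 / l = (l\<^sup>2 + 1) / l"
    using assms(1) by (simp add: add_divide_distrib power2_eq_square)
  then have eta: "1 / eta l = 2 * l / (l\<^sup>2 + 1)"
    by (simp add: eta_def)
  have "- \<i> - l \<noteq> 0"
    using assms(3) by (auto simp: algebra_simps)
  moreover have "\<i> + \<i> * (l * l) \<noteq> 0"
    using sq by (metis complex_i_not_zero distrib_left mult.right_neutral mult_eq_0_iff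
        power2_eq_square add.commute)
  ultimately have "1 / (- \<i> - l) + l / (- \<i> * l - 1) = \<i> - 2 * l / (l\<^sup>2 + 1)"
    using sq den by (simp add: field_simps power2_eq_square)
  then show ?thesis
    unfolding inv eta by simp
qed

definition param_root_mset :: "nat \<Rightarrow> complex multiset \<Rightarrow> complex multiset" where
  "param_root_mset k L = replicate_mset k 1 + L + L + image_mset inverse L + image_mset inverse L"

lemma sum_param_root_mset:
  "(\<Sum>x\<in>#param_root_mset k L. g x) = of_nat k * g 1 + 2 * (\<Sum>l\<in>#L. g l + g (inverse l))"
proof -
  have "(\<Sum>x\<in>#image_mset inverse L. g x) = (\<Sum>l\<in>#L. g (inverse l))"
    by (simp add: multiset.map_comp o_def)
  then show ?thesis
    by (simp add: param_root_mset_def sum_mset.distrib mult_2 add.assoc)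
qed

lemma sum_param_root_mset_inverse_eta:
  "(\<Sum>x\<in>#param_root_mset k L. 1 / eta x) = of_nat k + 4 * (\<Sum>l\<in>#L. 1 / eta l)"
  by (simp add: sum_param_root_mset eta_inverse sum_mset.distrib sum_mset_distrib_left)

lemma Re_sum_param_root_mset_inverse_minus_i:
  assumes "\<forall>l\<in>#L. l \<noteq> 0 \<and> l \<noteq> \<i> \<and> l \<noteq> - \<i>"
  shows "Re (\<Sum>x\<in>#param_root_mset k L. 1 / (- \<i> - x)) = - of_nat k / 2 - 2 * Re (\<Sum>l\<in>#L. 1 / eta l)"
proof -
  have "(\<Sum>l\<in>#L. 1 / (- \<i> - l) + 1 / (- \<i> - inverse l)) = (\<Sum>l\<in>#L. \<i> - 1 / eta l)"
    using assms inverse_minus_i_pair by (intro arg_cong[where f = sum_mset] image_mset_cong) auto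
  also have "\<dots> = of_nat (size L) * \<i> - (\<Sum>l\<in>#L. 1 / eta l)"
    by (induction L) (simp_all add: algebra_simps)
  finally show ?thesis
    by (simp add: sum_param_root_mset Re_divide)
qed

lemma le_at_limit_point_off_finite:
  fixes f g :: "'a::t2_space \<Rightarrow> real"
  assumes "a islimpt S" and "continuous (at a within S) f" and "continuous (at a within S) g"
    and "finite Z" and "\<And>x. x \<in> S \<Longrightarrow> x \<notin> Z \<Longrightarrow> f x \<le> g x"
  shows "f a \<le> g a"
proof -
  have "eventually (\<lambda>x. \<forall>z\<in>Z. x \<noteq> z) (at a within S)"
    using assms(4) by (intro eventually_ball_finite) (auto simp: eventually_neq_at_within)
  moreover have "eventually (\<lambda>x. x \<in> S) (at a within S)"
    by (simp add: eventually_at_filter)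
  ultimately have "eventually (\<lambda>x. f x \<le> g x) (at a within S)"
    by eventually_elim (use assms(5) in blast)
  moreover have "\<not> trivial_limit (at a within S)"
    using assms(1) by (simp add: trivial_limit_within)
  ultimately show ?thesis
    using assms(2,3) tendsto_le by (metis continuous_within)
qed

lemma has_vector_derivative_in_Reals:
  fixes f :: "real \<Rightarrow> complex"
  assumes "(f has_vector_derivative f') (at x)" and "eventually (\<lambda>y. f y \<in> \<real>) (nhds x)"
  shows "f' \<in> \<real>"
proof -
  have "((\<lambda>y. Im (f y)) has_real_derivative Im f') (at x)"
    using has_derivative_Im[OF assms(1)[unfolded has_vector_derivative_def]]
    by (simp add: has_field_derivative_def mult_commute_abs)
  moreover have "eventually (\<lambda>y. Im (f y) = 0) (nhds x)"
    using assms(2) by eventually_elim (simp add: complex_is_Real_iff)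
  ultimately have "((\<lambda>y. 0) has_real_derivative Im f') (at x)"
    using DERIV_cong_ev by (metis (mono_tags, lifting) eventually_mono)
  then show ?thesis
    using DERIV_const DERIV_unique by (metis complex_is_Real_iff)
qed

lemma has_vector_derivative_comp_exp_minus_i:
  assumes "(f has_field_derivative f') (at (exp (- (\<i> * of_real t))))"
  shows "((\<lambda>s. f (exp (- (\<i> * of_real s)))) has_vector_derivative
           - \<i> * exp (- (\<i> * of_real t)) * f') (at t)"
proof -
  have "((\<lambda>z. exp (- (\<i> * z))) has_field_derivative - \<i> * exp (- (\<i> * of_real t))) (at (of_real t))"
    by (auto intro!: derivative_eq_intros)
  then have "((\<lambda>s. exp (- (\<i> * of_real s))) has_vector_derivative - \<i> * exp (- (\<i> * of_real t))) (at t)"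
    by (rule has_vector_derivative_real_field)
  from field_vector_diff_chain_at[OF this assms] show ?thesis
    by (simp add: o_def)
qed

lemma exp_minus_i_pi_half: "exp (- (\<i> * of_real (pi / 2))) = - \<i>"
proof -
  have "exp (- (\<i> * of_real (pi / 2))) = cis (- (pi / 2))"
    by (simp add: cis_conv_exp)
  then show ?thesis
    by (simp add: complex_eq_iff)
qed

lemma cross_multiply_sum_squares_eq_1:
  fixes a b c d :: "'a::field"
  assumes "b \<noteq> 0" and "d \<noteq> 0" and "(a / b)\<^sup>2 + (c / d)\<^sup>2 = 1"
  shows "a\<^sup>2 * d\<^sup>2 + c\<^sup>2 * b\<^sup>2 = b\<^sup>2 * d\<^sup>2"
proof -
  have "a\<^sup>2 * d\<^sup>2 + c\<^sup>2 * b\<^sup>2 = ((a / b)\<^sup>2 + (c / d)\<^sup>2) * (b\<^sup>2 * d\<^sup>2)"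
    using assms(1,2) by (simp add: power_divide distrib_right)
  then show ?thesis
    using assms(3) by simp
qed

lemma poly_eq_if_eq_off_roots:
  fixes A B R :: "complex poly"
  assumes "R \<noteq> 0" and "\<And>z. poly R z \<noteq> 0 \<Longrightarrow> poly A z = poly B z"
  shows "A = B"
proof -
  have "poly (R * (A - B)) z = 0" for z
    using assms(2)[of z] by auto
  then have "R * (A - B) = 0"
    using poly_all_0_iff_0 by blast
  then show ?thesis
    using assms(1) by simp
qed

locale coprime_zero_sym_filter =
  fixes p q :: "real poly"
  assumes zero_sym: "zero_sym_filter p q" and coprime: "coprime p q"
begin

abbreviation P :: "complex poly" where "P \<equiv> of_real_poly p"
abbreviation Q :: "complex poly" where "Q \<equiv> of_real_poly q"
abbreviation H :: "complex \<Rightarrow> complex" where "H \<equiv> rat_eval p q"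

lemma H_eq: "H z = poly P z / poly Q z"
  by (simp add: rat_eval_def)

lemma Q_nonzero: "Q \<noteq> 0"
  using zero_sym by (simp add: zero_sym_filter_def)

lemma poly_Q_nonzero_if_root_P: "poly P z = 0 \<Longrightarrow> poly Q z \<noteq> 0"
  using coprime by (rule of_real_poly_no_common_root)

lemma poly_P_nonzero_if_root_Q: "poly Q z = 0 \<Longrightarrow> poly P z \<noteq> 0"
  using coprime by (metis coprime_commute of_real_poly_no_common_root)

lemma H_eq_1_iff: "poly Q z \<noteq> 0 \<Longrightarrow> H z = 1 \<longleftrightarrow> poly (P - Q) z = 0"
  by (simp add: H_eq)

lemma H_square_add_H_minus_square:
  "poly Q z \<noteq> 0 \<Longrightarrow> poly Q (- z) \<noteq> 0 \<Longrightarrow> (H z)\<^sup>2 + (H (- z))\<^sup>2 = 1"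
  using zero_sym by (simp add: zero_sym_filter_def)

lemma H_inverse: "z \<noteq> 0 \<Longrightarrow> poly Q z \<noteq> 0 \<Longrightarrow> poly Q (1 / z) \<noteq> 0 \<Longrightarrow> H z = H (1 / z)"
  using zero_sym unfolding zero_sym_filter_def by blast

lemma zero_sym_identity: "P\<^sup>2 * (neg_var Q)\<^sup>2 + (neg_var P)\<^sup>2 * Q\<^sup>2 = Q\<^sup>2 * (neg_var Q)\<^sup>2"
proof (rule poly_eq_if_eq_off_roots)
  show "Q * neg_var Q \<noteq> 0"
    using Q_nonzero by simp
  fix z
  assume "poly (Q * neg_var Q) z \<noteq> 0"
  then have "poly Q z \<noteq> 0" "poly Q (- z) \<noteq> 0"
    by auto
  from cross_multiply_sum_squares_eq_1[OF this H_square_add_H_minus_square[OF this, unfolded H_eq]]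
  show "poly (P\<^sup>2 * (neg_var Q)\<^sup>2 + (neg_var P)\<^sup>2 * Q\<^sup>2) z = poly (Q\<^sup>2 * (neg_var Q)\<^sup>2) z"
    by (simp add: mult.commute)
qed

lemma P_nonzero: "P \<noteq> 0"
  using zero_sym_identity Q_nonzero by auto

lemma order_zero_sym_identity:
  "2 * order (- s) Q + order s (Q - P) + order s (Q + P) = 2 * order (- s) P + 2 * order s Q"
proof -
  have "(neg_var P)\<^sup>2 * Q\<^sup>2 = Q\<^sup>2 * (neg_var Q)\<^sup>2 - P\<^sup>2 * (neg_var Q)\<^sup>2"
    using zero_sym_identity by (metis add_diff_cancel_left')
  also have "\<dots> = neg_var Q * neg_var Q * ((Q - P) * (Q + P))"
    by (simp add: algebra_simps power2_eq_square)
  finally have eq: "neg_var Q * neg_var Q * ((Q - P) * (Q + P)) = neg_var P * neg_var P * (Q * Q)"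
    by (simp add: power2_eq_square)
  have "neg_var P * neg_var P * (Q * Q) \<noteq> 0"
    using P_nonzero Q_nonzero by simp
  with eq have "Q - P \<noteq> 0" and "Q + P \<noteq> 0"
    by auto
  with arg_cong[OF eq, of "order s"] show ?thesis
    using P_nonzero Q_nonzero by (simp add: order_mult order_neg_var)
qed

lemma order_Q_uminus: "order (- s) Q = order s Q"
proof -
  have le: "order s Q \<le> order (- s) Q" for s
  proof (cases "poly Q s = 0")
    case True
    then have "poly (Q - P) s \<noteq> 0" and "poly (Q + P) s \<noteq> 0"
      using poly_P_nonzero_if_root_Q by auto
    then show ?thesis
      using order_zero_sym_identity[of s] by (simp add: order_0I)
  qed (simp add: order_0I)
  show ?thesis
    using le[of s] le[of "- s"] by simp
qed

lemma image_mset_proots_Q: "image_mset (\<lambda>x. - cnj x) (proots Q) = proots Q"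
proof (rule multiset_eqI)
  fix x
  have "count (image_mset (\<lambda>x. - cnj x) (proots Q)) x = order (cnj x) Q"
    using Q_nonzero by (simp add: count_image_mset_involution order_Q_uminus)
  also have "\<dots> = order x Q"
    using order_map_poly_cnj[OF Q_nonzero, of x] by simp
  finally show "count (image_mset (\<lambda>x. - cnj x) (proots Q)) x = count (proots Q) x"
    using Q_nonzero by simp
qed

lemma H_in_Reals_on_circle:
  assumes "cmod z = 1" and "poly Q z \<noteq> 0"
  shows "H z \<in> \<real>"
proof -
  have "z * cnj z = 1"
    using complex_norm_square[of z] assms(1) by simp
  moreover have "z \<noteq> 0"
    using assms(1) by auto
  ultimately have inv: "1 / z = cnj z"
    by (simp add: divide_eq_eq mult.commute)
  have "H z = H (1 / z)"
    using assms by (intro H_inverse) (auto simp: inv poly_of_real_poly_cnj)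
  also have "\<dots> = cnj (H z)"
    by (simp add: inv H_eq poly_of_real_poly_cnj)
  finally show ?thesis
    by (simp add: Reals_cnj_iff)
qed

lemma norm_poly_P_le_on_circle:
  assumes "cmod z = 1" and "poly Q z \<noteq> 0" and "poly Q (- z) \<noteq> 0"
  shows "cmod (poly P z) \<le> cmod (poly Q z)"
proof -
  obtain x y where x: "H z = of_real x" and y: "H (- z) = of_real y"
    using H_in_Reals_on_circle assms by (metis Reals_cases norm_minus_cancel)
  have "of_real (x\<^sup>2 + y\<^sup>2) = (1 :: complex)"
    using H_square_add_H_minus_square[OF assms(2,3)] x y by simp
  then have "x\<^sup>2 \<le> 1"
    by (metis le_add_same_cancel1 of_real_eq_1_iff zero_le_power2)
  then have "cmod (H z) \<le> 1"
    using x by (simp add: abs_square_le_1)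
  then show ?thesis
    using assms(2) by (simp add: H_eq norm_divide divide_le_eq_1)
qed

(* On the unit circle |P| <= |Q| off the finitely many roots of Q(z) Q(-z), hence by continuity
   also at a root of Q, which would then be a common root of P and Q. *)
lemma poly_Q_i_nonzero: "poly Q \<i> \<noteq> 0"
proof
  assume Q_i: "poly Q \<i> = 0"
  let ?Z = "{z. poly Q z = 0} \<union> {z. poly (neg_var Q) z = 0}"
  have "cmod (poly P \<i>) \<le> cmod (poly Q \<i>)"
  proof (rule le_at_limit_point_off_finite[where f = "\<lambda>z. cmod (poly P z)" and g = "\<lambda>z. cmod (poly Q z)"
        and a = \<i> and S = "sphere 0 1" and Z = ?Z])
    have "sphere (0 :: complex) 1 \<noteq> {x}" for x
      using mem_sphere_0[of 1] mem_sphere_0[of "- 1"] by (metis norm_minus_cancel norm_one singletonD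
          one_neq_neg_one)
    then show "\<i> islimpt sphere 0 1"
      by (intro connected_imp_perfect connected_sphere) auto
    show "finite ?Z"
      using Q_nonzero poly_roots_finite[of Q] poly_roots_finite[of "neg_var Q"] by auto
    show "cmod (poly P z) \<le> cmod (poly Q z)" if "z \<in> sphere 0 1" and "z \<notin> ?Z" for z
      using that norm_poly_P_le_on_circle by auto
  qed (intro continuous_intros)+
  then show False
    using Q_i poly_P_nonzero_if_root_Q by simp
qed

lemma poly_Q_minus_i_nonzero: "poly Q (- \<i>) \<noteq> 0"
  using poly_Q_i_nonzero poly_of_real_poly_cnj[of q \<i>] by simp

lemma H_minus_i_eq_H_i: "H (- \<i>) = H \<i>"
  using H_inverse[of \<i>] poly_Q_i_nonzero poly_Q_minus_i_nonzero by simp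

lemma H_minus_i_square: "(H (- \<i>))\<^sup>2 = 1 / 2"
  using H_square_add_H_minus_square[of "- \<i>"] poly_Q_i_nonzero poly_Q_minus_i_nonzero
    H_minus_i_eq_H_i by (simp add: mult.commute)

lemma H_minus_i_eq: "H (- \<i>) = of_real (sgn (Re (H \<i>)) * sqrt 2 / 2)"
proof -
  obtain h where h: "H (- \<i>) = of_real h"
    using H_in_Reals_on_circle[of "- \<i>"] poly_Q_minus_i_nonzero by (auto elim: Reals_cases)
  then have "of_real (h\<^sup>2) = (of_real (1 / 2) :: complex)"
    using H_minus_i_square by simp
  then have "h\<^sup>2 = 1 / 2"
    by (simp only: of_real_eq_iff)
  then have "\<bar>h\<bar> = sqrt (1 / 2)"
    by (metis real_sqrt_abs)
  also have "sqrt (1 / 2) = sqrt 2 / 2"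
    by (simp add: real_sqrt_divide divide_simps)
  finally have "\<bar>h\<bar> = sqrt 2 / 2" .
  moreover have "Re (H \<i>) = h"
    using h H_minus_i_eq_H_i by simp
  ultimately show ?thesis
    using h by (metis sgn_mult_abs mult.assoc times_divide_eq_right)
qed

lemma H_minus_i_ne_1: "H (- \<i>) \<noteq> 1"
  using H_minus_i_square by auto

lemma poly_P_minus_Q_minus_i_nonzero: "poly (P - Q) (- \<i>) \<noteq> 0"
  using H_eq_1_iff poly_Q_minus_i_nonzero H_minus_i_ne_1 by blast

lemma poly_P_minus_Q_i_nonzero: "poly (P - Q) \<i> \<noteq> 0"
  using H_eq_1_iff poly_Q_i_nonzero H_minus_i_ne_1 H_minus_i_eq_H_i by auto

lemma H_has_field_derivative:
  assumes "poly Q z \<noteq> 0" and "H z \<noteq> 1"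
  shows "(H has_field_derivative (H z - 1) * (log_deriv_sum (P - Q) z - log_deriv_sum Q z)) (at z)"
proof -
  have "poly (P - Q) z \<noteq> 0"
    using assms H_eq_1_iff by blast
  from has_field_derivative_poly_quotient[OF this assms(1)]
  have "((\<lambda>w. poly (P - Q) w / poly Q w + 1) has_field_derivative
          poly (P - Q) z / poly Q z * (log_deriv_sum (P - Q) z - log_deriv_sum Q z) + 0) (at z)"
    by (intro DERIV_add DERIV_const)
  moreover have H_off_roots: "poly (P - Q) w / poly Q w + 1 = H w" if "poly Q w \<noteq> 0" for w
    using that by (simp add: H_eq diff_divide_distrib)
  then have "poly (P - Q) z / poly Q z = H z - 1"
    using assms(1) by (metis add_diff_cancel_right')
  ultimately have "((\<lambda>w. poly (P - Q) w / poly Q w + 1) has_field_derivative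
          (H z - 1) * (log_deriv_sum (P - Q) z - log_deriv_sum Q z)) (at z)"
    by (simp only: add_0_right)
  moreover have "open {w. poly Q w \<noteq> 0}"
    by (intro open_Collect_neq continuous_intros)
  ultimately show ?thesis
    using assms(1) H_off_roots by (elim has_field_derivative_transform_within_open) auto
qed

lemma m0_has_vector_derivative:
  "((\<lambda>\<xi>. H (exp (- (\<i> * of_real \<xi>)))) has_vector_derivative
      - ((H (- \<i>) - 1) * (log_deriv_sum (P - Q) (- \<i>) - log_deriv_sum Q (- \<i>)))) (at (pi / 2))"
proof -
  have "(H has_field_derivative
          (H (- \<i>) - 1) * (log_deriv_sum (P - Q) (- \<i>) - log_deriv_sum Q (- \<i>)))
          (at (exp (- (\<i> * of_real (pi / 2)))))"
    unfolding exp_minus_i_pi_half by (rule H_has_field_derivative[OF poly_Q_minus_i_nonzero H_minus_i_ne_1])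
  from has_vector_derivative_comp_exp_minus_i[OF this] show ?thesis
    unfolding exp_minus_i_pi_half by simp
qed

lemma log_deriv_sum_diff_minus_i_in_Reals: "log_deriv_sum (P - Q) (- \<i>) - log_deriv_sum Q (- \<i>) \<in> \<real>"
proof -
  have "open {\<xi>. poly Q (exp (- (\<i> * of_real \<xi>))) \<noteq> 0}"
    by (intro open_Collect_neq continuous_intros)
  then have "eventually (\<lambda>\<xi>. \<xi> \<in> {\<xi>. poly Q (exp (- (\<i> * of_real \<xi>))) \<noteq> 0}) (nhds (pi / 2))"
    using poly_Q_minus_i_nonzero exp_minus_i_pi_half by (intro eventually_nhds_in_open) auto
  then have "eventually (\<lambda>\<xi>. H (exp (- (\<i> * of_real \<xi>))) \<in> \<real>) (nhds (pi / 2))"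
    by eventually_elim (simp add: H_in_Reals_on_circle norm_exp_eq_Re)
  from has_vector_derivative_in_Reals[OF m0_has_vector_derivative this]
  have "(H (- \<i>) - 1) * (log_deriv_sum (P - Q) (- \<i>) - log_deriv_sum Q (- \<i>)) \<in> \<real>"
    by (simp add: Reals_minus_iff)
  moreover have "H (- \<i>) - 1 \<in> \<real>"
    unfolding H_minus_i_eq by (intro Reals_diff) auto
  moreover have "H (- \<i>) - 1 \<noteq> 0"
    using H_minus_i_ne_1 by simp
  ultimately show ?thesis
    by (metis Reals_divide nonzero_mult_div_cancel_left)
qed

lemma Re_log_deriv_sum_Q_minus_i: "Re (log_deriv_sum Q (- \<i>)) = 0"
  unfolding log_deriv_sum_def by (rule Re_sum_mset_inverse_diff_eq_0) (simp_all add: image_mset_proots_Q)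

lemma order_1_P_minus_Q:
  assumes "poly Q 1 \<noteq> 0" and "H 1 = 1" and "poly P (- 1) = 0"
  shows "order 1 (P - Q) = 2 * order (- 1) P"
proof -
  have "poly (P - Q) 1 = 0"
    using assms(1,2) H_eq_1_iff by blast
  then have "poly (Q + P) 1 \<noteq> 0"
    using assms(1) by simp
  moreover have "poly Q (- 1) \<noteq> 0"
    using assms(3) poly_Q_nonzero_if_root_P by blast
  moreover have "order 1 (Q - P) = order 1 (P - Q)"
    by (metis minus_diff_eq order_uminus)
  ultimately show ?thesis
    using order_zero_sym_identity[of 1] assms(1) by (simp add: order_0I)
qed

lemma proots_P_minus_Q:
  assumes "poly Q 1 \<noteq> 0" and "H 1 = 1" and "poly P (- 1) = 0" and "is_param_multiset p q L"
  shows "proots (P - Q) = param_root_mset (2 * order (- 1) P) L"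
proof (rule multiset_eqI)
  fix w
  have "poly (P - Q) (- 1) \<noteq> 0"
    using assms(3) poly_Q_nonzero_if_root_P by auto
  then have count_w: "count (proots (P - Q)) w = order w (P - Q)"
    by (metis count_proots poly_0)
  have inv: "count (image_mset inverse L) w = count L (inverse w)"
    by (simp add: count_image_mset_involution)
  show "count (proots (P - Q)) w = count (param_root_mset (2 * order (- 1) P) L) w"
  proof (cases "w = 1")
    case True
    moreover have "count L 1 = 0"
      using assms(4) by (simp add: is_param_multiset_def not_in_iff)
    ultimately show ?thesis
      using count_w inv order_1_P_minus_Q[OF assms(1-3)] by (simp add: param_root_mset_def)
  next
    case False
    then have "order w (P - Q) = 2 * (count L w + count L (inverse w))"
      using assms(4) by (simp add: is_param_multiset_def of_real_poly_diff inverse_eq_divide)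
    then show ?thesis
      using count_w inv False by (simp add: param_root_mset_def)
  qed
qed

lemma param_multiset_avoids_0_i:
  assumes "proots (P - Q) = param_root_mset k L" and "is_param_multiset p q L" and "l \<in># L"
  shows "l \<noteq> 0" and "l \<noteq> \<i>" and "l \<noteq> - \<i>"
proof -
  have "count L 0 = 0"
    using assms(2) unfolding is_param_multiset_def by (metis div_by_0)
  then show "l \<noteq> 0"
    using assms(3) by (metis not_in_iff)
  have "l \<in># proots (P - Q)"
    using assms(1,3) by (simp add: param_root_mset_def)
  then have "poly (P - Q) l = 0"
    by (cases "P - Q = 0") auto
  then show "l \<noteq> \<i>" and "l \<noteq> - \<i>"
    using poly_P_minus_Q_i_nonzero poly_P_minus_Q_minus_i_nonzero by auto
qed

lemma image_mset_cnj_proots_P_minus_Q: "image_mset cnj (proots (P - Q)) = proots (P - Q)"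
  using image_mset_cnj_proots_of_real_poly[of "p - q"] by (simp add: of_real_poly_diff)


lemma log_deriv_sum_diff_minus_i_eq:
  assumes "proots (P - Q) = param_root_mset k L" and "is_param_multiset p q L"
  shows "log_deriv_sum (P - Q) (- \<i>) - log_deriv_sum Q (- \<i>)
           = - of_nat k / 2 - 2 * (\<Sum>l\<in>#L. 1 / eta l)"
proof -
  define S where "S = (\<Sum>l\<in>#L. 1 / eta l)"
  have "of_nat k + 4 * S \<in> \<real>"
    using sum_mset_in_Reals_if_cnj_invariant[OF image_mset_cnj_proots_P_minus_Q, of "\<lambda>x. 1 / eta x"]
    by (simp add: assms(1) sum_param_root_mset_inverse_eta cnj_eta S_def)
  then have "(of_nat k + 4 * S - of_nat k) / 4 \<in> \<real>"
    by (intro Reals_divide Reals_diff) auto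
  then have "S \<in> \<real>"
    by simp
  moreover have "Re (log_deriv_sum (P - Q) (- \<i>) - log_deriv_sum Q (- \<i>)) = - of_nat k / 2 - 2 * Re S"
    using Re_sum_param_root_mset_inverse_minus_i[of L k] Re_log_deriv_sum_Q_minus_i
      param_multiset_avoids_0_i[OF assms]
    by (simp add: S_def log_deriv_sum_def assms(1))
  ultimately show ?thesis
    using log_deriv_sum_diff_minus_i_in_Reals by (simp add: complex_eq_iff complex_is_Real_iff S_def)
qed

end

theorem corollary2:
  fixes p q :: "real poly" and m :: nat and L :: "complex multiset"
  assumes "zero_sym_filter p q"
    and "coprime p q"
    and "poly q 1 \<noteq> 0" and "rat_eval p q 1 = 1"
    and "m \<ge> 1"
    and "order (-1) p = 2 * m"
    and "is_param_multiset p q L"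
  shows "((\<lambda>\<xi>::real. rat_eval p q (exp (- (\<i> * complex_of_real \<xi>)))) has_vector_derivative
           (- complex_of_real (2 - sqrt 2 * sgn (Re (rat_eval p q \<i>)))
              * (of_nat m + (\<Sum>l\<in>#L. 1 / eta l)))) (at (pi / 2))"
proof -
  interpret coprime_zero_sym_filter p q
    using assms(1,2) by unfold_locales
  have order_P: "order (- 1) P = 2 * m"
    using order_of_real_poly[of p "- 1"] P_nonzero assms(6) by simp
  moreover have "poly P (- 1) = 0"
    using order_P assms(5) P_nonzero by (simp add: order_root)
  moreover have "poly Q 1 \<noteq> 0"
    using assms(3) poly_of_real_poly_of_real[of q 1] by simp
  ultimately have roots: "proots (P - Q) = param_root_mset (4 * m) L"
    using proots_P_minus_Q[OF _ assms(4) _ assms(7)] by simp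
  have "- ((H (- \<i>) - 1) * (log_deriv_sum (P - Q) (- \<i>) - log_deriv_sum Q (- \<i>)))
          = - complex_of_real (2 - sqrt 2 * sgn (Re (H \<i>))) * (of_nat m + (\<Sum>l\<in>#L. 1 / eta l))"
    unfolding log_deriv_sum_diff_minus_i_eq[OF roots assms(7)] H_minus_i_eq by (simp add: algebra_simps)
  then show ?thesis
    using m0_has_vector_derivative by simp
qed

end
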